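(* There is an absolute constant $\delta>0$ such that the following holds. For $A\ge1$ and $y\ge1$ define \[ f_A(y)=\delta\min\Big\{\frac{\big(\operatorname{Log}_2 y-\frac{\operatorname{Log} A}{\log 4-1}\big)^2}{\operatorname{Log} A},\ \operatorname{Log} A+\operatorname{Log}_2 y\Big\}, \] and for $x>1$ let $\mathcal{S}^A_{<x}$ be the set of $n\in\mathcal{S}_{<x}$ such that \[ \tau(n_{<y})\le A\,e^{-f_A(y)}\operatorname{Log} y\quad\text{for all } y\in[1,x]. \] Then for all $A\ge1$ and $x>1$, \[ \sum_{n\in\mathcal{S}_{<x}\setminus\mathcal{S}^A_{<x}}\frac1n\ll\frac{\operatorname{Log} x}{A}, \] with an absolute implied constant.
   Context: $\operatorname{Log} x=\max\{1,\log x\}$, $\operatorname{Log}_2 x=\operatorname{Log}(\operatorname{Log} x)$. $\tau(n)$ is the number of divisors of $n$. For $x\ge1$, $\mathcal{S}_{<x}$ is the set of square-free natural numbers all of whose prime factors are $<x$ (including $1$). For $n\in\mathcal{S}_{<x}$ and $1\le y\le x$, $n_{<y}$ denotes the product of the prime factors of $n$ that are $<y$ (so $n=n_{<y}n_{\ge y}$ with $n_{\ge y}$ having all prime factors in $[y,x)$). *)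

theory Defs
  imports "HOL-Analysis.Analysis" "HOL-Computational_Algebra.Squarefree"
begin

definition Logm :: "real \<Rightarrow> real" where
  "Logm x = max 1 (ln x)"

definition Log2 :: "real \<Rightarrow> real" where
  "Log2 x = Logm (Logm x)"

definition tau :: "nat \<Rightarrow> nat" where
  "tau n = card {d. d dvd n}"

definition S_lt :: "real \<Rightarrow> nat set" where
  "S_lt x = {n. n > 0 \<and> squarefree n \<and> (\<forall>p\<in>prime_factors n. real p < x)}"

definition part_lt :: "nat \<Rightarrow> real \<Rightarrow> nat" where
  "part_lt n y = (\<Prod>p\<in>{p\<in>prime_factors n. real p < y}. p)"

definition fA :: "real \<Rightarrow> real \<Rightarrow> real \<Rightarrow> real" where
  "fA \<delta> A y = \<delta> * min ((Log2 y - Logm A / (ln 4 - 1))^2 / Logm A) (Logm A + Log2 y)"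

definition SA_lt :: "real \<Rightarrow> real \<Rightarrow> real \<Rightarrow> nat set" where
  "SA_lt \<delta> A x = {n \<in> S_lt x. \<forall>y. 1 \<le> y \<and> y \<le> x \<longrightarrow>
      real (tau (part_lt n y)) \<le> A * exp (- fA \<delta> A y) * Logm y}"

end

theory Submission
  imports Defs
begin

(*
  Identify n \<in> S_lt x with the set S of its prime factors, so that 1/n = \<Prod>p\<in>S. 1/p and
  tau (part_lt n y) = 2 ^ #(S \<inter> [1, y)). Under the product measure in which each p < x lies in S
  with probability (1/p) / (1 + 1/p), the quantity t ^ #(S \<inter> [1, y)) divided by its mean
  \<Prod>p<y. (1 + t/p) / (1 + 1/p) <= exp ((t - 1) (log log y + O(1))) is a martingale in y. By Ville's
  maximal inequality the n for which it ever exceeds a level L have \<Sum> 1/n <= \<Prod>p<x. (1 + 1/p) / L,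
  which is << Log x / L. If n is exceptional at y and log log y is about j sqrt (log A) away from
  its mean (log A) / (log 4 - 1), the tilt t = 2 ^ (1 +- c j / sqrt (log A)) exceeds the level
  A e^(c' j); if log log y >> log A, the tilt t = sqrt 2 does. Summing over j gives << Log x / A.
*)

section \<open>Chebyshev and Mertens bounds\<close>

definition primes_le :: "nat \<Rightarrow> nat set" where
  "primes_le n = {p. prime p \<and> p \<le> n}"

definition primes_below :: "real \<Rightarrow> nat set" where
  "primes_below x = {p. prime p \<and> real p < x}"

lemma finite_primes_le [simp]: "finite (primes_le n)"
  unfolding primes_le_def by (rule finite_subset[of _ "{..n}"]) auto

lemma finite_primes_below [simp]: "finite (primes_below x)"
proof (rule finite_subset)
  show "primes_below x \<subseteq> {..nat \<lceil>x\<rceil>}"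
  proof
    fix p assume "p \<in> primes_below x"
    then have "real p < x" unfolding primes_below_def by simp
    then have "real p \<le> real_of_int \<lceil>x\<rceil>" by linarith
    then show "p \<in> {..nat \<lceil>x\<rceil>}" by simp
  qed
qed simp

lemma prod_prime_powers_dvd:
  fixes N :: nat
  assumes "finite P" "\<forall>p\<in>P. prime p" "\<forall>p\<in>P. p ^ e p dvd N"
  shows "(\<Prod>p\<in>P. p ^ e p) dvd N"
  using assms
proof (induction P rule: finite_induct)
  case (insert p F)
  have "coprime (p ^ e p) (\<Prod>q\<in>F. q ^ e q)"
    by (rule prod_coprime_right) (use insert in \<open>auto intro!: primes_coprime\<close>)
  with insert show ?case by (simp add: divides_mult)
qed simp

lemma central_binomial_odd_le: "(2*m+1 choose m) \<le> 4^m"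
proof -
  have "(\<Sum>k\<in>{m, m+1}. (2*m+1) choose k) \<le> (\<Sum>k\<le>2*m+1. (2*m+1) choose k)"
    by (rule sum_mono2) auto
  also have "\<dots> = 2^(2*m+1)" by (rule choose_row_sum)
  finally have "(2*m+1 choose m) + (2*m+1 choose (m+1)) \<le> 2^(2*m+1)" by simp
  moreover have "(2*m+1 choose (m+1)) = (2*m+1 choose m)"
    using binomial_symmetric[of "m+1" "2*m+1"] by simp
  ultimately show ?thesis by (simp add: power_mult power_add)
qed

lemma prime_dvd_central_binomial_odd:
  assumes "prime p" "m+1 < p" "p \<le> 2*m+1"
  shows "p dvd (2*m+1 choose m)"
proof -
  have eq: "fact m * fact (m+1) * (2*m+1 choose m) = (fact (2*m+1) :: nat)"
    using binomial_fact_lemma[of m "2*m+1"] by (simp add: algebra_simps)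
  have "p dvd (fact (2*m+1) :: nat)"
    using prime_dvd_fact_iff[OF assms(1)] assms(3) by blast
  then have "p dvd fact m * fact (m+1) * (2*m+1 choose m)"
    by (simp only: eq)
  moreover have "\<not> p dvd (fact m :: nat)" "\<not> p dvd (fact (m+1) :: nat)"
    using prime_dvd_fact_iff[OF assms(1), of m] prime_dvd_fact_iff[OF assms(1), of "m+1"] assms(2)
    by linarith+
  ultimately show ?thesis
    using assms(1) by (simp only: prime_dvd_mult_iff) blast
qed

lemma primorial_odd_le: "\<Prod>(primes_le (2*m+1)) \<le> \<Prod>(primes_le (m+1)) * 4^m"
proof -
  let ?Q = "{p. prime p \<and> m+1 < p \<and> p \<le> 2*m+1}"
  have finQ: "finite ?Q" by (rule finite_subset[of _ "{..2*m+1}"]) auto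
  have split: "primes_le (2*m+1) = primes_le (m+1) \<union> ?Q"
    and disj: "primes_le (m+1) \<inter> ?Q = {}"
    unfolding primes_le_def by auto
  have eq: "\<Prod>(primes_le (2*m+1)) = \<Prod>(primes_le (m+1)) * \<Prod>?Q"
    unfolding split by (rule prod.union_disjoint) (use finQ disj in auto)
  have "(\<Prod>p\<in>?Q. p ^ 1) dvd (2*m+1 choose m)"
    by (rule prod_prime_powers_dvd) (use finQ prime_dvd_central_binomial_odd in auto)
  then have "\<Prod>?Q dvd (2*m+1 choose m)" by simp
  then have "\<Prod>?Q \<le> (2*m+1 choose m)"
    by (rule dvd_imp_le) (simp add: zero_less_binomial_iff)
  also have "\<dots> \<le> 4^m" by (rule central_binomial_odd_le)
  finally show ?thesis unfolding eq by (rule mult_le_mono2)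
qed

lemma primorial_le_four_pow: "\<Prod>(primes_le n) \<le> 4^n"
proof (induction n rule: less_induct)
  case (less n)
  show ?case
  proof (cases "n \<le> 2")
    case True
    have "primes_le n \<subseteq> {2}"
    proof
      fix p assume "p \<in> primes_le n"
      then have "2 \<le> p" "p \<le> n" unfolding primes_le_def using prime_ge_2_nat by auto
      with True show "p \<in> {2}" by simp
    qed
    then consider "primes_le n = {}" | "primes_le n = {2}" by (auto simp: subset_singleton_iff)
    then show ?thesis
    proof cases
      case 2
      then have "2 \<le> n" unfolding primes_le_def by blast
      then show ?thesis using 2 power_increasing[of 1 n "4::nat"] by simp
    qed simp
  next
    case False
    show ?thesis
    proof (cases "even n")
      case True
      then have "\<not> prime n" using False prime_odd_nat by auto
      then have "primes_le n = primes_le (n-1)"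
        unfolding primes_le_def using False by (auto simp: le_less)
      then have "\<Prod>(primes_le n) \<le> 4^(n-1)" using less[of "n-1"] False by simp
      also have "\<dots> \<le> 4^n" by (rule power_increasing) auto
      finally show ?thesis .
    next
      case odd: False
      then obtain m where n: "n = 2*m+1" by (metis oddE)
      have "\<Prod>(primes_le n) \<le> \<Prod>(primes_le (m+1)) * 4^m"
        unfolding n by (rule primorial_odd_le)
      also have "\<dots> \<le> 4^(m+1) * 4^m"
        using less[of "m+1"] n False by simp
      also have "\<dots> = 4^n" by (simp add: n power_add[symmetric])
      finally show ?thesis .
    qed
  qed
qed

lemma sum_ln_primes_le: "(\<Sum>p\<in>primes_le n. ln (real p)) \<le> real n * ln 4"
proof -
  have pos: "\<And>p. p \<in> primes_le n \<Longrightarrow> real p > 0"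
    unfolding primes_le_def using prime_gt_0_nat by auto
  have "(\<Sum>p\<in>primes_le n. ln (real p)) = ln (real (\<Prod>(primes_le n)))"
    using pos by (simp add: ln_prod)
  also have "\<dots> \<le> ln (real (4^n))"
  proof (subst ln_le_cancel_iff)
    show "real (\<Prod>(primes_le n)) \<le> real (4^n)"
      using primorial_le_four_pow[of n] by (simp only: of_nat_le_iff)
  qed (use pos in \<open>auto intro!: prod_pos\<close>)
  also have "\<dots> = real n * ln 4" by (simp add: ln_realpow)
  finally show ?thesis .
qed

lemma power_div_dvd_fact: "p > 0 \<Longrightarrow> p ^ (n div p) dvd (fact n :: nat)"
proof (induction n)
  case (Suc n)
  show ?case
  proof (cases "Suc n mod p = 0")
    case True
    then have "p * p ^ (n div p) dvd Suc n * fact n"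
      using Suc by (intro mult_dvd_mono) auto
    then show ?thesis using True by (simp add: div_Suc)
  next
    case False
    then show ?thesis using Suc by (simp add: div_Suc dvd_mult)
  qed
qed simp

lemma sum_div_ln_primes_le: "(\<Sum>p\<in>primes_le n. real (n div p) * ln (real p)) \<le> real n * ln (real n)"
proof (cases "n = 0")
  case True
  then show ?thesis unfolding primes_le_def using prime_gt_0_nat by auto
next
  case False
  have pp: "\<forall>p\<in>primes_le n. prime p" unfolding primes_le_def by auto
  have "(\<Prod>p\<in>primes_le n. p ^ (n div p)) dvd fact n"
    by (rule prod_prime_powers_dvd) (use pp power_div_dvd_fact prime_gt_0_nat in auto)
  then have "(\<Prod>p\<in>primes_le n. p ^ (n div p)) \<le> fact n" by (rule dvd_imp_le) simp
  also have "(fact n :: nat) \<le> n ^ n" using fact_le_power[of n, where 'a=nat] by simp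
  finally have le: "(\<Prod>p\<in>primes_le n. p ^ (n div p)) \<le> n ^ n" .
  have "(\<Sum>p\<in>primes_le n. real (n div p) * ln (real p)) = ln (real (\<Prod>p\<in>primes_le n. p ^ (n div p)))"
    using pp prime_gt_0_nat by (simp add: ln_prod ln_realpow)
  also have "\<dots> \<le> ln (real (n ^ n))"
  proof (subst ln_le_cancel_iff)
    show "real (\<Prod>p\<in>primes_le n. p ^ (n div p)) \<le> real (n ^ n)"
      using le by (simp only: of_nat_le_iff)
  qed (use pp prime_gt_0_nat False in \<open>auto intro!: prod_pos\<close>)
  also have "\<dots> = real n * ln (real n)" using False by (simp add: ln_realpow)
  finally show ?thesis .
qed

lemma sum_ln_div_primes_le:
  assumes "n \<ge> 1"
  shows "(\<Sum>p\<in>primes_le n. ln (real p) / real p) \<le> ln (real n) + ln 4"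
proof -
  have "real n * (\<Sum>p\<in>primes_le n. ln (real p) / real p) = (\<Sum>p\<in>primes_le n. (real n / real p) * ln (real p))"
    by (simp add: sum_distrib_left)
  also have "\<dots> \<le> (\<Sum>p\<in>primes_le n. (real (n div p) + 1) * ln (real p))"
  proof (rule sum_mono)
    fix p assume "p \<in> primes_le n"
    then have p: "p > 0" "ln (real p) \<ge> 0" unfolding primes_le_def using prime_gt_0_nat by (auto simp: Suc_le_eq)
    have "real n \<le> (real (n div p) + 1) * real p"
      using p(1) div_mult_mod_eq[of n p] mod_less_divisor[of p n]
      by (metis (no_types, lifting) add.commute add_le_cancel_left distrib_right
          less_or_eq_imp_le mult_1 of_nat_add of_nat_le_iff of_nat_mult)
    then have "real n / real p \<le> real (n div p) + 1" using p by (simp add: divide_le_eq)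
    then show "(real n / real p) * ln (real p) \<le> (real (n div p) + 1) * ln (real p)"
      using p by (intro mult_right_mono) auto
  qed
  also have "\<dots> = (\<Sum>p\<in>primes_le n. real (n div p) * ln (real p)) + (\<Sum>p\<in>primes_le n. ln (real p))"
    by (simp add: distrib_right sum.distrib)
  also have "\<dots> \<le> real n * (ln (real n) + ln 4)"
    using sum_div_ln_primes_le sum_ln_primes_le by (simp add: distrib_left add_mono)
  finally show ?thesis using assms by (simp add: mult_le_cancel_left_pos)
qed

definition prime_recip_sum :: "nat \<Rightarrow> real" where
  "prime_recip_sum n = (\<Sum>p\<in>primes_le n. 1 / real p)"

definition prime_ln_recip_sum :: "nat \<Rightarrow> real" where
  "prime_ln_recip_sum n = (\<Sum>p\<in>primes_le n. ln (real p) / real p)"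

lemma primes_le_Suc:
  "primes_le (Suc n) = (if prime (Suc n) then insert (Suc n) (primes_le n) else primes_le n)"
  unfolding primes_le_def by (auto simp: le_Suc_eq)

text \<open>Partial summation, one integer at a time: from \<open>n\<close> to \<open>n + 1\<close> the left-hand side changes
  only through the factor \<open>1 / ln n\<close>, and that change is paid for by the bound on
  \<open>prime_ln_recip_sum n\<close>.\<close>

lemma prime_recip_sum_partial_summation:
  assumes "n \<ge> 2"
  shows "prime_recip_sum n - prime_ln_recip_sum n / ln n
    \<le> ln (ln n) - ln (ln 2) + ln 4 * (1 / ln 2 - 1 / ln n)"
  using assms
proof (induction n rule: nat_induct_at_least)
  case base
  have "primes_le 2 = {2}"
    unfolding primes_le_def using prime_ge_2_nat by (auto intro: antisym)
  then show ?case unfolding prime_recip_sum_def prime_ln_recip_sum_def by simp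
next
  case (Suc n)
  let ?T = prime_recip_sum and ?S = prime_ln_recip_sum
  have ln1: "ln (real n) > 0" using Suc.hyps by simp
  have ln2: "ln (real (Suc n)) > ln (real n)" using Suc.hyps by simp
  have step: "?T (Suc n) - ?S (Suc n) / ln (Suc n) = ?T n - ?S n / ln (Suc n)"
  proof (cases "prime (Suc n)")
    case True
    then have "?T (Suc n) = ?T n + 1 / real (Suc n)"
      and "?S (Suc n) = ?S n + ln (real (Suc n)) / real (Suc n)"
      unfolding prime_recip_sum_def prime_ln_recip_sum_def primes_le_Suc
      by (simp_all add: primes_le_def)
    then show ?thesis using ln1 ln2 Suc.hyps by (simp add: add_divide_distrib)
  qed (simp add: prime_recip_sum_def prime_ln_recip_sum_def primes_le_Suc)
  have d: "1 / ln n - 1 / ln (Suc n) \<ge> 0" using ln1 ln2 by (simp add: frac_le)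
  have "?T n - ?S n / ln (Suc n) = (?T n - ?S n / ln n) + ?S n * (1 / ln n - 1 / ln (Suc n))"
    by (simp add: field_simps)
  also have "?S n * (1 / ln n - 1 / ln (Suc n)) \<le> (ln n + ln 4) * (1 / ln n - 1 / ln (Suc n))"
    using sum_ln_div_primes_le[of n] Suc.hyps d unfolding prime_ln_recip_sum_def
    by (intro mult_right_mono) auto
  also have "\<dots> = (1 - ln n / ln (Suc n)) + ln 4 * (1 / ln n - 1 / ln (Suc n))"
    using ln1 ln2 by (simp add: distrib_right right_diff_distrib add_divide_distrib)
  also have "1 - ln n / ln (Suc n) \<le> ln (ln (Suc n)) - ln (ln n)"
    using ln_le_minus_one[of "ln n / ln (Suc n)"] ln1 ln2 Suc.hyps by (simp add: ln_div)
  finally show ?case using Suc.IH step by (simp add: algebra_simps)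
qed

lemma ln_four: "ln (4::real) = 2 * ln 2"
  using ln_realpow[of 2 2] by simp

lemma prime_recip_sum_le: "n \<ge> 2 \<Longrightarrow> prime_recip_sum n \<le> ln (ln (real n)) + 6"
proof -
  assume n: "n \<ge> 2"
  have l2: "ln (2::real) \<ge> 2/3" by (rule ln2_ge_two_thirds)
  have lnn: "ln (real n) \<ge> ln 2" using n by simp
  have lnp: "ln (real n) > 0" using lnn l2 by linarith
  have "1 - 1 / ln 2 \<le> ln (ln (2::real))"
    using ln_le_minus_one[of "1 / ln 2"] l2 by (simp add: ln_div)
  moreover have "1 / ln (2::real) \<le> 3/2" using l2 by (simp add: divide_le_eq)
  ultimately have a: "- ln (ln (2::real)) \<le> 1/2" by simp
  have "ln 4 * (1 / ln 2 - 1 / ln n) = 2 - ln 4 / ln n"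
    using ln_four l2 by (simp add: right_diff_distrib)
  moreover have "ln 4 / ln n \<ge> 0" using lnp by simp
  ultimately have b: "ln 4 * (1 / ln 2 - 1 / ln n) \<le> 2" by linarith
  have "prime_ln_recip_sum n \<le> ln n + ln 4"
    using sum_ln_div_primes_le[of n] n unfolding prime_ln_recip_sum_def by simp
  also have "\<dots> \<le> 3 * ln n" using ln_four lnn by simp
  finally have c: "prime_ln_recip_sum n / ln n \<le> 3" using lnp by (simp add: divide_le_eq)
  show ?thesis using prime_recip_sum_partial_summation[OF n] a b c by linarith
qed

lemma sum_recip_primes_below_le: "(\<Sum>p\<in>primes_below y. 1 / real p) \<le> ln (Logm y) + 6"
proof (cases "y \<le> 2")
  case True
  have "primes_below y = {}"
  proof (intro equalityI subsetI)
    fix p assume "p \<in> primes_below y"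
    then have "real p < y" "2 \<le> p" unfolding primes_below_def using prime_ge_2_nat by auto
    with True show "p \<in> {}" by simp
  qed simp
  then show ?thesis unfolding Logm_def by simp
next
  case False
  define N where "N = nat \<lfloor>y\<rfloor>"
  have N2: "N \<ge> 2" and Ny: "real N \<le> y" using False unfolding N_def by linarith+
  have "primes_below y \<subseteq> primes_le N"
    unfolding primes_le_def primes_below_def N_def by (auto intro: le_nat_floor)
  then have "(\<Sum>p\<in>primes_below y. 1 / real p) \<le> prime_recip_sum N"
    unfolding prime_recip_sum_def by (intro sum_mono2) auto
  also have "\<dots> \<le> ln (ln (real N)) + 6" using prime_recip_sum_le N2 by simp
  also have "ln (ln (real N)) \<le> ln (Logm y)"
  proof -
    have "0 < ln (real N)" using N2 by simp
    moreover have "ln (real N) \<le> ln y" using N2 Ny by simp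
    then have "ln (real N) \<le> Logm y" unfolding Logm_def by linarith
    ultimately show ?thesis by simp
  qed
  finally show ?thesis by simp
qed

section \<open>A maximal inequality for weighted subsets\<close>

text \<open>Choose \<open>S \<subseteq> P\<close> by including each \<open>p\<close> independently with probability \<open>w p / (1 + w p)\<close>;
  then \<open>\<Prod>p\<in>S. w p\<close> divided by \<open>\<Prod>p\<in>P. 1 + w p\<close> is the probability of \<open>S\<close>, and
  \<open>mgf_below P w t c\<close> is the expectation of \<open>t ^ card {p\<in>S. p < c}\<close>. Their ratio is a
  martingale in \<open>c\<close>, and the bound on exceeding sets below is Ville's maximal inequality for it.\<close>

definition mgf_below :: "nat set \<Rightarrow> (nat \<Rightarrow> real) \<Rightarrow> real \<Rightarrow> nat \<Rightarrow> real" where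
  "mgf_below P w t c = (\<Prod>p\<in>{p\<in>P. p < c}. (1 + t * w p) / (1 + w p))"

definition exceeding_sets :: "nat set \<Rightarrow> (nat \<Rightarrow> real) \<Rightarrow> real \<Rightarrow> real \<Rightarrow> nat set set" where
  "exceeding_sets P w t l = {S \<in> Pow P. \<exists>c. t ^ card {p\<in>S. p < c} \<ge> l * mgf_below P w t c}"

lemma sum_Pow_prod:
  fixes w :: "'a \<Rightarrow> real"
  assumes "finite P"
  shows "(\<Sum>S\<in>Pow P. \<Prod>p\<in>S. w p) = (\<Prod>p\<in>P. 1 + w p)"
  using prod_add[OF assms, of w "\<lambda>_. 1"] by (simp add: add.commute)

lemma sum_prod_le_prod_one_plus:
  fixes w :: "'a \<Rightarrow> real"
  assumes "finite P" "\<forall>p\<in>P. w p \<ge> 0" "B \<subseteq> Pow P"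
  shows "(\<Sum>S\<in>B. \<Prod>p\<in>S. w p) \<le> (\<Prod>p\<in>P. 1 + w p)"
proof -
  have "(\<Sum>S\<in>B. \<Prod>p\<in>S. w p) \<le> (\<Sum>S\<in>Pow P. \<Prod>p\<in>S. w p)"
    using assms by (intro sum_mono2) (auto intro!: prod_nonneg)
  then show ?thesis using sum_Pow_prod[OF assms(1)] by simp
qed

lemma sum_prod_insert_split:
  fixes w :: "'a \<Rightarrow> real"
  assumes "finite F" "q \<notin> F" "B \<subseteq> Pow (insert q F)"
  shows "(\<Sum>S\<in>B. \<Prod>p\<in>S. w p)
    = (\<Sum>S\<in>B \<inter> Pow F. \<Prod>p\<in>S. w p) + w q * (\<Sum>S\<in>{S\<in>Pow F. insert q S \<in> B}. \<Prod>p\<in>S. w p)"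
proof -
  have finB: "finite B" using assms by (meson finite_Pow_iff finite_insert finite_subset)
  have B: "B = (B \<inter> Pow F) \<union> insert q ` {S\<in>Pow F. insert q S \<in> B}"
    using assms(3) by (auto simp: Pow_insert)
  have disj: "(B \<inter> Pow F) \<inter> insert q ` {S\<in>Pow F. insert q S \<in> B} = {}"
    using assms(2) by auto
  have inj: "inj_on (insert q) {S\<in>Pow F. insert q S \<in> B}"
    using assms(2) by (intro inj_onI) (metis PowD insert_ident mem_Collect_eq subsetD)
  have "(\<Sum>S\<in>insert q ` {S\<in>Pow F. insert q S \<in> B}. \<Prod>p\<in>S. w p)
      = (\<Sum>S\<in>{S\<in>Pow F. insert q S \<in> B}. \<Prod>p\<in>insert q S. w p)"
    using sum.reindex[OF inj, of "\<lambda>S. \<Prod>p\<in>S. w p"] by (simp add: o_def)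
  also have "\<dots> = w q * (\<Sum>S\<in>{S\<in>Pow F. insert q S \<in> B}. \<Prod>p\<in>S. w p)"
    unfolding sum_distrib_left
    using assms(1,2) by (intro sum.cong) (auto intro: prod.insert dest: finite_subset)
  moreover have "(\<Sum>S\<in>B. \<Prod>p\<in>S. w p) = (\<Sum>S\<in>B \<inter> Pow F. \<Prod>p\<in>S. w p)
      + (\<Sum>S\<in>insert q ` {S\<in>Pow F. insert q S \<in> B}. \<Prod>p\<in>S. w p)"
    using finB disj by (subst B, subst sum.union_disjoint) (auto intro: finite_subset[OF _ finB])
  ultimately show ?thesis by simp
qed

lemma mgf_below_insert_min:
  assumes "finite F" "\<forall>p\<in>F. q < p"
  shows "mgf_below (insert q F) w t c
    = (if c \<le> q then 1 else (1 + t * w q) / (1 + w q) * mgf_below F w t c)"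
proof (cases "c \<le> q")
  case True
  then have "{p\<in>insert q F. p < c} = {}" using assms(2) by force
  then show ?thesis using True unfolding mgf_below_def by (simp only:) simp
next
  case False
  then have "{p\<in>insert q F. p < c} = insert q {p\<in>F. p < c}" by auto
  moreover have "q \<notin> {p\<in>F. p < c}" using assms(2) by auto
  ultimately show ?thesis using False assms(1) unfolding mgf_below_def by simp
qed

text \<open>Both halves of the induction step below rest on the fact that the least element \<open>q\<close>
  cannot make a set exceed a level \<open>l > 1\<close> on its own: below \<open>q\<close> the ratio is \<open>1\<close>.\<close>

lemma exceeding_sets_insert_min_without:
  assumes "finite F" "\<forall>p\<in>F. q < p" "l > 1"
  shows "exceeding_sets (insert q F) w t l \<inter> Pow F
    \<subseteq> exceeding_sets F w t (l * ((1 + t * w q) / (1 + w q)))"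
proof
  fix S assume S: "S \<in> exceeding_sets (insert q F) w t l \<inter> Pow F"
  then obtain c where c: "t ^ card {p\<in>S. p < c} \<ge> l * mgf_below (insert q F) w t c"
    unfolding exceeding_sets_def by auto
  have "\<not> c \<le> q"
  proof
    assume "c \<le> q"
    then have "{p\<in>S. p < c} = {}" using S assms(2) by force
    then have "t ^ card {p\<in>S. p < c} = 1" by (simp only:) simp
    then show False using c assms(3) \<open>c \<le> q\<close> by (simp add: mgf_below_insert_min[OF assms(1,2)])
  qed
  then show "S \<in> exceeding_sets F w t (l * ((1 + t * w q) / (1 + w q)))"
    using c S unfolding exceeding_sets_def by (auto simp: mgf_below_insert_min[OF assms(1,2)] mult.assoc)
qed

lemma exceeding_sets_insert_min_with:
  assumes "finite F" "\<forall>p\<in>F. q < p" "l > 1" "t > 0" "S \<subseteq> F"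
    and "insert q S \<in> exceeding_sets (insert q F) w t l"
  shows "S \<in> exceeding_sets F w t (l * ((1 + t * w q) / (1 + w q)) / t)"
proof -
  obtain c where c: "t ^ card {p\<in>insert q S. p < c} \<ge> l * mgf_below (insert q F) w t c"
    using assms(6) unfolding exceeding_sets_def by auto
  have "\<not> c \<le> q"
  proof
    assume "c \<le> q"
    then have "{p\<in>insert q S. p < c} = {}" using assms(2,5) by force
    then have "t ^ card {p\<in>insert q S. p < c} = 1" by (simp only:) simp
    then show False using c assms(3) \<open>c \<le> q\<close> by (simp add: mgf_below_insert_min[OF assms(1,2)])
  qed
  moreover have "finite S" "q \<notin> S" using assms(1,2,5) finite_subset by auto
  ultimately have "card {p\<in>insert q S. p < c} = Suc (card {p\<in>S. p < c})"
    by (subst card_insert_disjoint[symmetric]) (auto intro: arg_cong[where f=card])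
  with c \<open>\<not> c \<le> q\<close> have "l * ((1 + t * w q) / (1 + w q) * mgf_below F w t c)
      \<le> t * t ^ card {p\<in>S. p < c}"
    by (simp add: mgf_below_insert_min[OF assms(1,2)])
  then have "l * ((1 + t * w q) / (1 + w q) * mgf_below F w t c) / t \<le> t ^ card {p\<in>S. p < c}"
    by (simp only: pos_divide_le_eq[OF assms(4)] mult.commute[of _ t])
  then have "l * ((1 + t * w q) / (1 + w q)) / t * mgf_below F w t c \<le> t ^ card {p\<in>S. p < c}"
    by (simp add: mult.assoc times_divide_eq_left)
  then show ?thesis unfolding exceeding_sets_def using assms(5) by auto
qed

lemma sum_prod_exceeding_sets_insert_min_le:
  fixes w :: "nat \<Rightarrow> real" and q :: nat and t :: real
  defines "r \<equiv> (1 + t * w q) / (1 + w q)"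
  assumes "finite F" "\<forall>p\<in>F. q < p" "\<forall>p\<in>insert q F. w p \<ge> 0" "t > 0" "l > 1"
  shows "(\<Sum>S\<in>exceeding_sets (insert q F) w t l. \<Prod>p\<in>S. w p)
    \<le> (\<Sum>S\<in>exceeding_sets F w t (l * r). \<Prod>p\<in>S. w p)
      + w q * (\<Sum>S\<in>exceeding_sets F w t (l * r / t). \<Prod>p\<in>S. w p)"
proof -
  let ?B = "exceeding_sets (insert q F) w t l"
  have "q \<notin> F" using assms(3) by auto
  then have "(\<Sum>S\<in>?B. \<Prod>p\<in>S. w p) = (\<Sum>S\<in>?B \<inter> Pow F. \<Prod>p\<in>S. w p)
      + w q * (\<Sum>S\<in>{S\<in>Pow F. insert q S \<in> ?B}. \<Prod>p\<in>S. w p)"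
    using assms(2) by (intro sum_prod_insert_split) (auto simp: exceeding_sets_def)
  also have "(\<Sum>S\<in>?B \<inter> Pow F. \<Prod>p\<in>S. w p) \<le> (\<Sum>S\<in>exceeding_sets F w t (l * r). \<Prod>p\<in>S. w p)"
    using exceeding_sets_insert_min_without[of F q l w t] assms
    by (intro sum_mono2) (auto simp: exceeding_sets_def intro!: prod_nonneg)
  also have "(\<Sum>S\<in>{S\<in>Pow F. insert q S \<in> ?B}. \<Prod>p\<in>S. w p)
      \<le> (\<Sum>S\<in>exceeding_sets F w t (l * r / t). \<Prod>p\<in>S. w p)"
    using exceeding_sets_insert_min_with[of F q l t _ w] assms
    by (intro sum_mono2) (auto simp: exceeding_sets_def intro!: prod_nonneg)
  finally show ?thesis using assms(4) by (simp add: mult_left_mono)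
qed

lemma sum_prod_exceeding_sets_le_small_level:
  fixes w :: "nat \<Rightarrow> real"
  assumes "finite P" "\<forall>p\<in>P. w p \<ge> 0" "0 < l" "l \<le> 1"
  shows "(\<Sum>S\<in>exceeding_sets P w t l. \<Prod>p\<in>S. w p) \<le> (\<Prod>p\<in>P. 1 + w p) / l"
proof -
  have "(\<Sum>S\<in>exceeding_sets P w t l. \<Prod>p\<in>S. w p) \<le> (\<Prod>p\<in>P. 1 + w p)"
    using assms by (intro sum_prod_le_prod_one_plus) (auto simp: exceeding_sets_def)
  also have "\<dots> \<le> (\<Prod>p\<in>P. 1 + w p) / l"
    using assms by (simp add: le_divide_eq mult_left_le prod_nonneg)
  finally show ?thesis .
qed

lemma sum_prod_exceeding_sets_le:
  fixes w :: "nat \<Rightarrow> real"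
  assumes "finite P" "\<forall>p\<in>P. w p \<ge> 0" "t > 0" "l > 0"
  shows "(\<Sum>S\<in>exceeding_sets P w t l. \<Prod>p\<in>S. w p) \<le> (\<Prod>p\<in>P. 1 + w p) / l"
  using assms(1,2,4)
proof (induction P arbitrary: l rule: finite_linorder_min_induct)
  case (empty l)
  show ?case
  proof (cases "l \<le> 1")
    case False
    then have "exceeding_sets {} w t l = {}"
      unfolding exceeding_sets_def mgf_below_def by auto
    then show ?thesis using empty by simp
  qed (use sum_prod_exceeding_sets_le_small_level[of "{}"] empty in simp)
next
  case (insert q F l)
  show ?case
  proof (cases "l \<le> 1")
    case False
    define r where "r = (1 + t * w q) / (1 + w q)"
    define W where "W = (\<Prod>p\<in>F. 1 + w p)"
    have wq: "w q \<ge> 0" using insert.prems by auto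
    have D: "1 + t * w q > 0" using wq assms(3) by (simp add: add_pos_nonneg)
    then have r: "r > 0" unfolding r_def using wq by simp
    have IH: "(\<Sum>S\<in>exceeding_sets F w t l'. \<Prod>p\<in>S. w p) \<le> W / l'" if "l' > 0" for l'
      unfolding W_def using insert.IH[OF _ that] insert.prems by simp
    have "(\<Sum>S\<in>exceeding_sets (insert q F) w t l. \<Prod>p\<in>S. w p)
        \<le> (\<Sum>S\<in>exceeding_sets F w t (l * r). \<Prod>p\<in>S. w p)
          + w q * (\<Sum>S\<in>exceeding_sets F w t (l * r / t). \<Prod>p\<in>S. w p)"
      unfolding r_def using insert False assms(3) by (intro sum_prod_exceeding_sets_insert_min_le) auto
    also have "\<dots> \<le> W / (l * r) + w q * (W / (l * r / t))"
      using IH[of "l * r"] IH[of "l * r / t"] insert.prems r wq assms(3)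
      by (intro add_mono mult_left_mono) auto
    also have "\<dots> = W / l * ((1 + t * w q) / r)"
      using assms(3) r by (simp add: field_simps) (simp only: add_divide_distrib)
    also have "(1 + t * w q) / r = 1 + w q"
      unfolding r_def using wq D by simp
    also have "W / l * (1 + w q) = (\<Prod>p\<in>insert q F. 1 + w p) / l"
      unfolding W_def using insert.hyps by (auto simp: not_less_iff_gr_or_eq)
    finally show ?thesis .
  qed (use sum_prod_exceeding_sets_le_small_level insert in auto)
qed

lemma prod_one_plus_le_exp_sum:
  fixes w :: "'a \<Rightarrow> real"
  assumes "\<forall>p\<in>P. w p \<ge> 0"
  shows "(\<Prod>p\<in>P. 1 + w p) \<le> exp (\<Sum>p\<in>P. w p)"
proof (cases "finite P")
  case True
  have "(\<Prod>p\<in>P. 1 + w p) \<le> (\<Prod>p\<in>P. exp (w p))"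
    using assms by (intro prod_mono) (auto simp: add_increasing)
  then show ?thesis using True by (simp add: exp_sum)
qed simp

lemma mgf_below_le_exp:
  fixes w :: "nat \<Rightarrow> real"
  assumes "\<forall>p\<in>P. w p \<ge> 0" "t \<ge> 1"
  shows "mgf_below P w t c \<le> exp ((t - 1) * (\<Sum>p\<in>{p\<in>P. p < c}. w p))"
proof -
  have "mgf_below P w t c \<le> (\<Prod>p\<in>{p\<in>P. p < c}. 1 + (t - 1) * w p)"
    unfolding mgf_below_def
  proof (intro prod_mono conjI)
    fix p assume "p \<in> {p\<in>P. p < c}"
    then have w: "w p \<ge> 0" using assms(1) by auto
    show "0 \<le> (1 + t * w p) / (1 + w p)" using w assms(2) by simp
    have "0 \<le> (t - 1) * (w p * w p)" using w assms(2) by simp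
    then have "1 + t * w p \<le> (1 + (t - 1) * w p) * (1 + w p)"
      by (simp add: algebra_simps)
    then show "(1 + t * w p) / (1 + w p) \<le> 1 + (t - 1) * w p"
      using w by (simp add: divide_le_eq)
  qed
  also have "\<dots> \<le> exp (\<Sum>p\<in>{p\<in>P. p < c}. (t - 1) * w p)"
    using assms by (intro prod_one_plus_le_exp_sum) simp
  finally show ?thesis by (simp add: sum_distrib_left)
qed

lemma prod_one_plus_recip_primes_below_le: "(\<Prod>p\<in>primes_below x. 1 + 1 / real p) \<le> exp 6 * Logm x"
proof -
  have "(\<Prod>p\<in>primes_below x. 1 + 1 / real p) \<le> exp (ln (Logm x) + 6)"
    using prod_one_plus_le_exp_sum[of "primes_below x" "\<lambda>p. 1 / real p"] sum_recip_primes_below_le[of x]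
    by (meson exp_le_cancel_iff of_nat_0_le_iff order.trans zero_le_divide_1_iff)
  also have "\<dots> = exp 6 * Logm x" unfolding exp_add Logm_def by simp
  finally show ?thesis .
qed

section \<open>Square-free numbers as sets of primes\<close>

lemma prime_factors_prod_primes:
  assumes "finite S" "\<forall>p\<in>S. prime (p::nat)"
  shows "prime_factors (\<Prod>S) = S"
proof -
  have "prime_factors (prod id S) = \<Union>((prime_factors \<circ> id) ` S)"
    using assms by (intro prime_factors_prod) auto
  also have "\<dots> = S" using assms by (auto simp: prime_factorization_prime)
  finally show ?thesis by simp
qed

lemma prod_primes_pos: "\<forall>p\<in>S. prime (p::nat) \<Longrightarrow> \<Prod>S > 0"
  using prime_gt_0_nat by (auto intro: prod_pos)

lemma squarefree_prod_primes:
  assumes "finite S" "\<forall>p\<in>S. prime (p::nat)"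
  shows "squarefree (\<Prod>S)"
proof -
  have "squarefree (prod id S)"
    by (rule squarefree_prod_coprime) (use assms in \<open>auto intro: primes_coprime squarefree_prime\<close>)
  then show ?thesis by simp
qed

lemma prod_prime_factors_squarefree:
  assumes "n > 0" "squarefree (n::nat)"
  shows "\<Prod>(prime_factors n) = n"
proof -
  have "\<forall>p\<in>prime_factors n. multiplicity p n = 1"
    using squarefree_factorial_semiring'[of n] assms by auto
  then have "(\<Prod>p\<in>prime_factors n. p ^ multiplicity p n) = \<Prod>(prime_factors n)"
    by (intro prod.cong) auto
  then show ?thesis using prime_factorization_nat[OF assms(1)] by simp
qed

lemma inj_on_prod_primes: "inj_on Prod {S. finite S \<and> (\<forall>p\<in>S. prime (p::nat))}"
  by (intro inj_onI) (metis (no_types, lifting) mem_Collect_eq prime_factors_prod_primes)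

lemma divisors_prod_primes:
  assumes "finite T" "\<forall>p\<in>T. prime (p::nat)"
  shows "{d. d dvd \<Prod>T} = Prod ` Pow T"
proof (intro equalityI subsetI)
  fix d assume "d \<in> {d. d dvd \<Prod>T}"
  then have d: "d dvd \<Prod>T" by simp
  have "d > 0" using dvd_pos_nat[OF prod_primes_pos[OF assms(2)] d] .
  moreover have "squarefree d" using squarefree_mono[OF d squarefree_prod_primes[OF assms]] .
  ultimately have "d = \<Prod>(prime_factors d)" using prod_prime_factors_squarefree by simp
  moreover have "prime_factors d \<subseteq> T"
    using dvd_prime_factors[OF _ d] prod_primes_pos[OF assms(2)] prime_factors_prod_primes[OF assms] by simp
  ultimately show "d \<in> Prod ` Pow T" by blast
next
  fix d assume "d \<in> Prod ` Pow T"
  then obtain U where "U \<subseteq> T" "d = \<Prod>U" by auto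
  then show "d \<in> {d. d dvd \<Prod>T}" using prod_dvd_prod_subset[OF assms(1), of U id] by simp
qed

lemma tau_prod_primes:
  assumes "finite T" "\<forall>p\<in>T. prime (p::nat)"
  shows "tau (\<Prod>T) = 2 ^ card T"
proof -
  have "inj_on Prod (Pow T)"
    using assms by (intro inj_on_subset[OF inj_on_prod_primes]) (auto dest: finite_subset)
  then have "card (Prod ` Pow T) = card (Pow T)" by (rule card_image)
  then show ?thesis unfolding tau_def divisors_prod_primes[OF assms] using assms(1) by (simp add: card_Pow)
qed

lemma part_lt_prod_primes:
  assumes "finite S" "\<forall>p\<in>S. prime (p::nat)"
  shows "part_lt (\<Prod>S) y = \<Prod>{p\<in>S. real p < y}"
  unfolding part_lt_def prime_factors_prod_primes[OF assms] by simp

lemma bij_betw_prod_S_lt: "bij_betw Prod (Pow (primes_below x)) (S_lt x)"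
proof (rule bij_betw_imageI)
  show "inj_on Prod (Pow (primes_below x))"
    using finite_subset[OF _ finite_primes_below]
    by (intro inj_on_subset[OF inj_on_prod_primes]) (auto simp: primes_below_def)
  show "Prod ` Pow (primes_below x) = S_lt x"
  proof (intro equalityI subsetI)
    fix n assume "n \<in> Prod ` Pow (primes_below x)"
    then obtain S where S: "S \<subseteq> primes_below x" "n = \<Prod>S" by auto
    then have fS: "finite S" "\<forall>p\<in>S. prime p"
      using finite_subset[OF _ finite_primes_below] unfolding primes_below_def by auto
    then show "n \<in> S_lt x"
      using S(1) prod_primes_pos[OF fS(2)] squarefree_prod_primes[OF fS] prime_factors_prod_primes[OF fS]
      unfolding S(2) S_lt_def primes_below_def by auto
  next
    fix n assume "n \<in> S_lt x"
    then have "n > 0" "squarefree n" "prime_factors n \<subseteq> primes_below x"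
      unfolding S_lt_def primes_below_def by auto
    then show "n \<in> Prod ` Pow (primes_below x)"
      using prod_prime_factors_squarefree by (metis Pow_iff image_eqI)
  qed
qed

lemma sum_recip_S_lt_diff:
  "(\<Sum>n\<in>S_lt x - N. 1 / real n) = (\<Sum>S\<in>{S\<in>Pow (primes_below x). \<Prod>S \<notin> N}. \<Prod>p\<in>S. 1 / real p)"
proof -
  have bij: "bij_betw Prod (Pow (primes_below x)) (S_lt x)" by (rule bij_betw_prod_S_lt)
  have inj: "inj_on Prod {S\<in>Pow (primes_below x). \<Prod>S \<notin> N}"
    using bij_betw_imp_inj_on[OF bij] by (rule inj_on_subset) auto
  have "S_lt x - N = Prod ` {S\<in>Pow (primes_below x). \<Prod>S \<notin> N}"
    using bij_betw_imp_surj_on[OF bij] by auto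
  then have "(\<Sum>n\<in>S_lt x - N. 1 / real n) = (\<Sum>S\<in>{S\<in>Pow (primes_below x). \<Prod>S \<notin> N}. 1 / real (\<Prod>S))"
    using sum.reindex[OF inj, of "\<lambda>n. 1 / real n"] by (simp only: o_def)
  also have "\<dots> = (\<Sum>S\<in>{S\<in>Pow (primes_below x). \<Prod>S \<notin> N}. \<Prod>p\<in>S. 1 / real p)"
    by (rule sum.cong) (simp_all add: prod_dividef)
  finally show ?thesis .
qed

section \<open>Choice of the tilt\<close>

definition c0 :: real where "c0 = ln 4 - 1"
definition eta :: real where "eta = c0^2 / 64"
definition delta0 :: real where "delta0 = c0^3 / 1024"
definition kappa :: real where "kappa = c0^3 / 128"

lemma c0_bounds: "1/3 \<le> c0" "c0 \<le> 7/18"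
  using ln2_ge_two_thirds ln2_le_25_over_36 unfolding c0_def ln_four by auto

lemma c0_pos: "c0 > 0"
  using c0_bounds by simp

lemma delta0_pos: "delta0 > 0"
  unfolding delta0_def using c0_pos by simp

lemma delta0_le: "delta0 \<le> 1/1024"
proof -
  have "c0^3 \<le> 1" using c0_bounds by (intro power_le_one) auto
  then show ?thesis unfolding delta0_def by simp
qed

lemma kappa_pos: "kappa > 0"
  unfolding kappa_def using c0_pos by simp

lemma exp_le_one_plus_plus_square:
  fixes z :: real
  assumes "\<bar>z\<bar> \<le> 1"
  shows "exp z \<le> 1 + z + z^2"
proof (cases "z \<ge> 0")
  case True
  then show ?thesis using exp_bound[of z] assms by simp
next
  case False
  define w where "w = -z"
  have w: "0 < w" "w \<le> 1" using False assms unfolding w_def by auto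
  have "exp z = 1 / exp w" unfolding w_def by (simp add: exp_minus field_simps)
  also have "\<dots> \<le> 1 / (1 + w)" using w by (intro divide_left_mono) (auto simp: add_pos_pos)
  also have "\<dots> \<le> 1 - w + w^2"
  proof -
    have "1 \<le> (1 - w + w^2) * (1 + w)"
      using w by (simp add: algebra_simps power2_eq_square power3_eq_cube)
    then show ?thesis using w by (simp add: divide_le_eq)
  qed
  finally show ?thesis unfolding w_def by simp
qed

text \<open>The linear coefficient is \<open>2 ln 2 = 1 + c0\<close>; this is where \<open>log 4 - 1\<close> enters.\<close>

lemma two_powr_one_plus_le:
  assumes "\<bar>e\<bar> \<le> 1"
  shows "2 powr (1 + e) \<le> 2 + (1 + c0) * e + 2 * e^2"
proof -
  have l2: "0 < ln (2::real)" "ln (2::real) \<le> 1" using ln2_ge_two_thirds ln2_le_25_over_36 by auto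
  have z: "\<bar>e * ln 2\<bar> \<le> 1" using assms l2 by (simp add: abs_mult mult_le_one)
  have "2 powr (1 + e) = 2 * exp (e * ln 2)" by (simp add: powr_def algebra_simps exp_add)
  also have "\<dots> \<le> 2 * (1 + e * ln 2 + (e * ln 2)^2)" using exp_le_one_plus_plus_square[OF z] by simp
  also have "(e * ln 2)^2 \<le> e^2"
  proof -
    have "(ln 2)^2 \<le> (1::real)" using l2 by (intro power_le_one) auto
    then have "e^2 * (ln 2)^2 \<le> e^2" by (intro mult_left_le) auto
    then show ?thesis by (simp add: power_mult_distrib)
  qed
  then have "2 * (1 + e * ln 2 + (e * ln 2)^2) \<le> 2 + (1 + c0) * e + 2 * e^2"
    unfolding c0_def ln_four by (simp add: algebra_simps)
  finally show ?thesis by simp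
qed

lemma two_powr_one_plus_minus_one_mult_le:
  assumes "\<bar>e\<bar> \<le> 1" "l \<ge> 0" "B \<ge> 0"
  shows "(2 powr (1 + e) - 1) * (l + B) \<le> (1 + (1 + c0) * e + 2 * e^2) * l + 3 * B"
proof -
  have "(2 powr (1 + e) - 1) * l \<le> (1 + (1 + c0) * e + 2 * e^2) * l"
    using two_powr_one_plus_le[OF assms(1)] assms(2) by (intro mult_right_mono) auto
  moreover have "2 powr (1 + e) \<le> 2 powr 2" using assms(1) by (intro powr_mono) auto
  then have "(2 powr (1 + e) - 1) * B \<le> 3 * B" using assms(3) by (intro mult_right_mono) auto
  ultimately show ?thesis by (simp add: distrib_left)
qed

text \<open>\<open>tilt_clears a l f B s g\<close> says that the threshold \<open>T = exp (a - f + l)\<close>, raised to the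
  power \<open>s\<close>, beats the level \<open>exp (a + g)\<close> times the bound \<open>exp ((2 powr s - 1) * (l + B))\<close>
  for the mgf of the tilt \<open>t = 2 powr s\<close>.\<close>

definition tilt_clears :: "real \<Rightarrow> real \<Rightarrow> real \<Rightarrow> real \<Rightarrow> real \<Rightarrow> real \<Rightarrow> bool" where
  "tilt_clears a l f B s g \<longleftrightarrow> s * (a - f + l) \<ge> a + g + (2 powr s - 1) * (l + B)"

lemma tilt_clears_one_plus:
  fixes a l f e B :: real and j :: nat
  assumes a: "a \<ge> 1" and l: "0 \<le> l" "l \<le> 8 * a / c0" and e: "\<bar>e\<bar> \<le> 1"
    and H1: "e * (a - c0 * l) \<ge> c0 * eta * (real j)^2"
    and H2: "e^2 \<le> eta^2 * (real j)^2 / a"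
    and H3: "f \<le> delta0 * (real j + 1)^2" and f0: "f \<ge> 0" and B: "B \<ge> 0"
  shows "tilt_clears a l f B (1 + e) (kappa * j - (1 + 3 * B))"
proof -
  have cb: "1/3 \<le> c0" "c0 \<le> 7/18" by (fact c0_bounds)+
  define J where "J = real j"
  define K where "K = c0^3"
  have K: "0 < K" "K \<le> 1" unfolding K_def using cb by (auto simp: power_le_one)
  have JJ: "J \<le> J^2" unfolding J_def by (cases j) (auto simp: power2_eq_square)
  have J0: "0 \<le> J" unfolding J_def by simp
  have mgf: "(2 powr (1 + e) - 1) * (l + B) \<le> (1 + (1 + c0) * e + 2 * e^2) * l + 3 * B"
    using two_powr_one_plus_minus_one_mult_le[OF e l(1) B] .
  have s5: "e^2 * l \<le> (eta^2 * J^2 / a) * (8 * a / c0)"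
    using H2 l a unfolding J_def by (intro mult_mono) auto
  have s5': "(eta^2 * J^2 / a) * (8 * a / c0) = K * J^2 / 512"
    unfolding eta_def K_def using a cb by (simp add: field_simps power2_eq_square power3_eq_cube) 
  have s6: "(1 + e) * f \<le> 2 * (delta0 * (J + 1)^2)"
    using H3 f0 e unfolding J_def by (intro mult_mono) auto
  have s6': "2 * (delta0 * (J + 1)^2) \<le> K * J^2 / 256 + K / 256"
  proof -
    have q1: "(J + 1)^2 = J^2 + 2*J + 1" "(J - 1)^2 = J^2 - 2*J + 1" by (simp_all add: power2_eq_square algebra_simps)
    have "0 \<le> (J - 1)^2" by simp
    then have "(J + 1)^2 \<le> 2 * J^2 + 2" using q1 by linarith
    then have "2 * (delta0 * (J + 1)^2) \<le> 2 * (delta0 * (2 * J^2 + 2))"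
      unfolding delta0_def using K(1) K_def by (intro mult_left_mono) auto
    then show ?thesis unfolding delta0_def K_def by (simp add: algebra_simps)
  qed
  have h1: "c0 * eta * J^2 = K * J^2 / 64" unfolding eta_def K_def by (simp add: power2_eq_square power3_eq_cube)
  have kj: "kappa * J \<le> K * J^2 / 128" unfolding kappa_def K_def using JJ K unfolding K_def by (simp add: mult_left_mono)
  have H1a: "e * (a - c0 * l) \<ge> K * J^2 / 64" using H1 h1 unfolding J_def by linarith
  have H1b: "e * (a - c0 * l) = e * a - c0 * (e * l)" by (simp add: algebra_simps)
  have H1': "e * a - c0 * (e * l) \<ge> K * J^2 / 64" using H1a H1b by linarith
  have "(1 + (1 + c0) * e + 2 * e^2) * l = l + e * l + c0 * (e * l) + 2 * (e^2 * l)"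
    by (simp add: algebra_simps)
  moreover have "(1 + e) * (a - f + l) = a + e * a - (1 + e) * f + l + e * l"
    by (simp add: algebra_simps)
  ultimately have "(1 + e) * (a - f + l) \<ge> a + (kappa * J - (1 + 3 * B)) + (2 powr (1 + e) - 1) * (l + B)"
    using mgf s5 s5' s6 s6' H1' kj K by linarith
  then show ?thesis unfolding tilt_clears_def J_def by simp
qed

lemma tilt_clears_half:
  fixes a l f B :: real and j :: nat
  assumes a: "a \<ge> 1" and l: "l \<ge> 8 * a / c0" and f: "f \<le> delta0 * (a + l)" "f \<ge> 0"
    and B: "B \<ge> 0" and j: "real j \<le> l"
  shows "tilt_clears a l f B (1/2) (real j / 25 - B)"
proof -
  have "sqrt 2 \<le> sqrt ((283/200::real)^2)" by (intro real_sqrt_le_mono) (simp add: power2_eq_square)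
  then have s2: "2 powr (1/2) - 1 \<le> (83/200::real)" by (simp add: powr_half_sqrt)
  have l0: "l \<ge> 0" using l a c0_pos by (smt (verit) divide_nonneg_pos)
  have "8 * a \<le> c0 * l" using l c0_pos by (simp add: divide_le_eq mult.commute)
  also have "\<dots> \<le> 7/18 * l" using c0_bounds l0 by (intro mult_right_mono) auto
  finally have al: "a \<le> l / 20" using l0 by linarith
  have t1: "(2 powr (1/2) - 1) * l \<le> 83/200 * l" using s2 l0 by (rule mult_right_mono)
  have t2: "(2 powr (1/2) - 1) * B \<le> 83/200 * B" using s2 B by (rule mult_right_mono)
  have "delta0 * (a + l) \<le> 1/1024 * (a + l)" using delta0_le l0 a by (intro mult_right_mono) auto
  then have t3: "f \<le> a/1024 + l/1024" using f by simp
  have "(1/2) * (a - f + l) = a/2 - f/2 + l/2" by simp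
  moreover have "(2 powr (1/2) - 1) * (l + B) = (2 powr (1/2) - 1) * l + (2 powr (1/2) - 1) * B"
    by (simp only: distrib_left)
  ultimately show ?thesis
    unfolding tilt_clears_def using t1 t2 t3 f al j B l0 by linarith
qed

lemma ex_nat_mult_le_less:
  fixes d h :: real
  assumes "d \<ge> 0" "h > 0"
  obtains j :: nat where "real j * h \<le> d" "d < (real j + 1) * h"
proof -
  define j where "j = nat \<lfloor>d / h\<rfloor>"
  have "real j = of_int \<lfloor>d / h\<rfloor>" unfolding j_def using assms by simp
  then have "real j \<le> d / h" "d / h < real j + 1" by simp_all
  then show thesis using assms by (intro that) (simp_all add: le_divide_eq divide_less_eq)
qed

text \<open>Near the mean \<open>a / c0\<close> of \<open>l = ln (Logm y)\<close> we tilt by \<open>1 \<pm> eta * j / sqrt a\<close>, where the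
  distance to the mean is about \<open>j * sqrt a\<close>: the \<open>j\<close>-th tilt gains \<open>kappa * j\<close>.\<close>

lemma tilt_clears_off_mean:
  fixes a l f B \<sigma> :: real
  assumes a: "a \<ge> 1" and l: "0 \<le> l" "l \<le> 8 * a / c0"
    and f: "0 \<le> f" "f \<le> delta0 * (l - a / c0)^2 / a" and B: "B \<ge> 0"
    and \<sigma>: "\<bar>\<sigma>\<bar> = 1" "\<sigma> * (a / c0 - l) = \<bar>a / c0 - l\<bar>"
  shows "\<exists>j::nat. real j \<le> \<bar>l - a / c0\<bar> \<and> eta * real j / sqrt a \<le> 1
    \<and> tilt_clears a l f B (1 + \<sigma> * (eta * real j / sqrt a)) (kappa * real j - (1 + 3 * B))"
proof -
  define m where "m = a / c0"
  define h where "h = sqrt a"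
  define d where "d = \<bar>l - m\<bar>"
  have h1: "h \<ge> 1" and hh: "h * h = a" unfolding h_def using a by auto
  have m1: "m \<ge> 1" and cm: "c0 * m = a"
    unfolding m_def using a c0_bounds c0_pos by (auto simp: le_divide_eq)
  have d0: "d \<ge> 0" and d7: "d \<le> 7 * m" unfolding d_def using l m1 unfolding m_def by auto
  obtain j :: nat where jh: "real j * h \<le> d" and jh2: "d < (real j + 1) * h"
    using ex_nat_mult_le_less[OF d0, of h] h1 by force
  define J where "J = real j"
  have J0: "J \<ge> 0" unfolding J_def by simp
  note jh = jh[folded J_def] and jh2 = jh2[folded J_def]
  define e where "e = eta * J / h"
  have e0: "e \<ge> 0" unfolding e_def eta_def using J0 h1 by simp
  have e1: "e \<le> 1"
  proof -
    have "e = eta * (J * h) / a" unfolding e_def using hh h1 a by (simp add: field_simps)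
    also have "\<dots> \<le> eta * (7 * m) / a"
      using jh d7 a unfolding eta_def by (intro divide_right_mono mult_left_mono) auto
    also have "\<dots> = 7 * c0 / 64" unfolding m_def eta_def using a c0_pos by (simp add: power2_eq_square)
    also have "\<dots> \<le> 1" using c0_bounds by linarith
    finally show ?thesis .
  qed
  have "tilt_clears a l f B (1 + \<sigma> * e) (kappa * J - (1 + 3 * B))"
    unfolding J_def
  proof (rule tilt_clears_one_plus[OF a l])
    show "\<bar>\<sigma> * e\<bar> \<le> 1" using \<sigma>(1) e0 e1 by (simp add: abs_mult)
    have "a - c0 * l = c0 * (m - l)" using cm by (simp add: algebra_simps)
    then have "\<sigma> * (a - c0 * l) = c0 * d"
      using \<sigma>(2) unfolding d_def m_def by (simp add: abs_minus_commute)
    then have "\<sigma> * e * (a - c0 * l) = c0 * eta * J / h * d"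
      unfolding e_def by (metis (no_types, opaque_lifting) mult.commute mult.left_commute times_divide_eq_left)
    also have "\<dots> \<ge> c0 * eta * J / h * (J * h)"
      using jh c0_pos J0 h1 unfolding eta_def by (intro mult_left_mono) auto
    finally show "\<sigma> * e * (a - c0 * l) \<ge> c0 * eta * (real j)^2"
      using h1 unfolding J_def by (simp add: power2_eq_square)
    have "\<sigma>^2 = 1" using \<sigma>(1) by (metis power2_abs power_one)
    then have "(\<sigma> * e)^2 = e^2" by (simp add: power_mult_distrib)
    also have "\<dots> = eta^2 * (real j)^2 / a"
      unfolding e_def J_def using hh by (simp add: power_divide power_mult_distrib power2_eq_square)
    finally show "(\<sigma> * e)^2 \<le> eta^2 * (real j)^2 / a" by simp
    have "d^2 \<le> ((J + 1) * h)^2" using jh2 d0 by (intro power_mono) auto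
    also have "\<dots> = (J + 1)^2 * a" using hh by (simp add: power2_eq_square algebra_simps)
    finally have "d^2 / a \<le> (J + 1)^2" using a by (simp add: divide_le_eq)
    moreover have "(l - a / c0)^2 = d^2" unfolding d_def m_def by simp
    ultimately show "f \<le> delta0 * (real j + 1)^2"
      using f(2) delta0_pos mult_left_mono[of "d^2 / a" "(J + 1)^2" delta0] unfolding J_def by simp
  qed (use f B in auto)
  moreover have "J \<le> d" using jh J0 mult_left_mono[OF h1 J0] by simp
  ultimately show ?thesis
    using e1 unfolding J_def e_def d_def m_def h_def by blast
qed

lemma tilt_clears_exists:
  fixes a l f B :: real
  assumes a: "a \<ge> 1" and l: "l \<ge> 0" and B: "B \<ge> 0" and f0: "f \<ge> 0"
    and f: "f \<le> delta0 * min ((max 1 l - a / c0)^2 / a) (a + max 1 l)"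
  shows "\<exists>j::nat. real j \<le> l + a / c0 \<and>
     ((eta * real j / sqrt a \<le> 1 \<and> tilt_clears a l f B (1 - eta * real j / sqrt a) (kappa * real j - (1 + 3 * B))) \<or>
      tilt_clears a l f B (1 + eta * real j / sqrt a) (kappa * real j - (1 + 3 * B)) \<or>
      tilt_clears a l f B (1/2) (real j / 25 - B))"
proof -
  define m where "m = a / c0"
  have m1: "m \<ge> 1" unfolding m_def using a c0_bounds by (simp add: le_divide_eq)
  have fQ: "f \<le> delta0 * ((max 1 l - m)^2 / a)" and fL: "f \<le> delta0 * (a + max 1 l)"
    using f delta0_pos unfolding m_def by (smt (verit) mult_left_mono min.cobounded1 min.cobounded2)+
  show ?thesis
  proof (cases "l \<le> 8 * m")
    case True
    have "\<bar>max 1 l - m\<bar> \<le> \<bar>l - m\<bar>" using m1 l by auto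
    then have "(max 1 l - m)^2 \<le> (l - m)^2" by (simp add: abs_le_square_iff)
    then have "f \<le> delta0 * (l - m)^2 / a"
      using fQ delta0_pos a by (smt (verit) divide_right_mono mult_left_mono times_divide_eq_right)
    moreover define \<sigma> :: real where "\<sigma> = (if l \<le> m then 1 else -1)"
    moreover have "\<bar>\<sigma>\<bar> = 1" "\<sigma> * (m - l) = \<bar>m - l\<bar>" unfolding \<sigma>_def by auto
    ultimately obtain j :: nat where j: "real j \<le> \<bar>l - m\<bar>" "eta * real j / sqrt a \<le> 1"
      and clears: "tilt_clears a l f B (1 + \<sigma> * (eta * real j / sqrt a)) (kappa * real j - (1 + 3 * B))"
      using tilt_clears_off_mean[OF a l _ f0 _ B] True unfolding m_def by (auto simp: m_def)
    have jm: "real j \<le> l + a / c0" using j(1) l m1 unfolding m_def by linarith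
    show ?thesis
    proof (cases "l \<le> m")
      case True
      then show ?thesis using clears jm unfolding \<sigma>_def by auto
    next
      case False
      then have "tilt_clears a l f B (1 - eta * real j / sqrt a) (kappa * real j - (1 + 3 * B))"
        using clears unfolding \<sigma>_def by simp
      then show ?thesis using jm j(2) by blast
    qed
  next
    case False
    define j where "j = nat \<lfloor>l\<rfloor>"
    have j: "real j \<le> l" unfolding j_def using l by linarith
    have "max 1 l = l" using False m1 by simp
    then have "tilt_clears a l f B (1/2) (real j / 25 - B)"
      using tilt_clears_half[OF a _ _ f0 B j] False fL unfolding m_def by simp
    moreover have "real j \<le> l + a / c0" using j a c0_pos by (smt (verit) divide_nonneg_pos)
    ultimately show ?thesis by blast
  qed
qed

section \<open>Covering the exceptional set\<close>

lemma sum_Un_le: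
  fixes f :: "'a \<Rightarrow> real"
  assumes "finite A" "finite B" "\<forall>x\<in>A \<union> B. f x \<ge> 0"
  shows "sum f (A \<union> B) \<le> sum f A + sum f B"
  using sum_Un[OF assms(1,2), of f] assms(3) sum_nonneg[of "A \<inter> B" f] by auto

lemma sum_UN_le:
  fixes f :: "'a \<Rightarrow> real"
  assumes "finite I" "\<forall>i\<in>I. finite (X i)" "\<forall>i\<in>I. \<forall>x\<in>X i. f x \<ge> 0"
  shows "sum f (\<Union>i\<in>I. X i) \<le> (\<Sum>i\<in>I. sum f (X i))"
  using assms
proof (induction I rule: finite_induct)
  case (insert i I)
  have "sum f (\<Union>i\<in>insert i I. X i) \<le> sum f (X i) + sum f (\<Union>i\<in>I. X i)"
    using insert.prems insert.hyps by (simp only: UN_insert, intro sum_Un_le) auto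
  with insert show ?case by simp
qed simp

lemma in_exceeding_sets_if_tilt_clears:
  fixes S :: "nat set"
  assumes S: "S \<subseteq> primes_below x" and y: "y \<le> x" and s: "s \<ge> 0"
    and clears: "tilt_clears a (ln (Logm y)) f 6 s g"
    and gt: "2 ^ card {p\<in>S. real p < y} > exp a * exp (- f) * Logm y"
  shows "S \<in> exceeding_sets (primes_below x) (\<lambda>p. 1 / real p) (2 powr s) (exp (a + g))"
proof -
  define l where "l = ln (Logm y)"
  define k where "k = card {p\<in>S. real p < y}"
  define t where "t = 2 powr s"
  define c where "c = nat \<lceil>y\<rceil>"
  define T where "T = exp a * exp (- f) * Logm y"
  have Lp: "Logm y > 0" unfolding Logm_def by simp
  have t1: "t \<ge> 1" unfolding t_def using s by (simp add: ge_one_powr_ge_zero)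
  have below_c: "p < c \<longleftrightarrow> real p < y" for p
    unfolding c_def by (simp add: zless_nat_eq_int_zless less_ceiling_iff)
  have "{p\<in>primes_below x. p < c} = primes_below y"
    unfolding below_c primes_below_def using y by auto
  then have "mgf_below (primes_below x) (\<lambda>p. 1 / real p) t c \<le> exp ((t - 1) * (\<Sum>p\<in>primes_below y. 1 / real p))"
    using mgf_below_le_exp[of "primes_below x" "\<lambda>p. 1 / real p" t c] t1 by simp
  also have "\<dots> \<le> exp ((t - 1) * (l + 6))"
    unfolding l_def using sum_recip_primes_below_le[of y] t1 by (simp add: mult_left_mono)
  finally have mgf: "mgf_below (primes_below x) (\<lambda>p. 1 / real p) t c \<le> exp ((t - 1) * (l + 6))" .
  have "T > 0" unfolding T_def using Lp by simp
  have "t ^ k = (2 ^ k) powr s"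
    unfolding t_def by (simp add: powr_realpow[symmetric] powr_powr mult.commute)
  also have "\<dots> \<ge> T powr s" using gt \<open>T > 0\<close> s unfolding T_def k_def by (intro powr_mono2) auto
  also have "T powr s = exp (s * (a - f + l))"
    using \<open>T > 0\<close> Lp unfolding T_def l_def by (simp add: powr_def ln_mult mult.commute)
  also have "\<dots> \<ge> exp (a + g) * exp ((t - 1) * (l + 6))"
    using clears unfolding tilt_clears_def t_def l_def by (simp flip: exp_add)
  also have "exp (a + g) * exp ((t - 1) * (l + 6))
      \<ge> exp (a + g) * mgf_below (primes_below x) (\<lambda>p. 1 / real p) t c"
    using mgf by simp
  finally have "t ^ card {p\<in>S. p < c} \<ge> exp (a + g) * mgf_below (primes_below x) (\<lambda>p. 1 / real p) t c"
    unfolding k_def below_c .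
  then show ?thesis unfolding exceeding_sets_def t_def using S by auto
qed

lemma sum_prod_exceeding_primes_le:
  assumes "t > 0"
  shows "(\<Sum>S\<in>exceeding_sets (primes_below x) (\<lambda>p. 1 / real p) t (exp (a + g)). \<Prod>p\<in>S. 1 / real p)
    \<le> (\<Prod>p\<in>primes_below x. 1 + 1 / real p) / exp a * exp (- g)"
proof -
  have "(\<Sum>S\<in>exceeding_sets (primes_below x) (\<lambda>p. 1 / real p) t (exp (a + g)). \<Prod>p\<in>S. 1 / real p)
      \<le> (\<Prod>p\<in>primes_below x. 1 + 1 / real p) / exp (a + g)"
    using assms by (intro sum_prod_exceeding_sets_le) auto
  also have "\<dots> = (\<Prod>p\<in>primes_below x. 1 + 1 / real p) / exp a * exp (- g)"
    by (simp add: exp_add exp_minus field_simps)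
  finally show ?thesis .
qed

text \<open>The first two tilts serve \<open>ln (Logm y)\<close> above and below its mean \<open>a / c0\<close>, the third
  serves it far above; \<open>19 = 1 + 3 * 6\<close>, with \<open>6\<close> the constant in \<open>sum_recip_primes_below_le\<close>.\<close>

definition tilt_family :: "real \<Rightarrow> real \<Rightarrow> nat \<Rightarrow> nat set set" where
  "tilt_family x a j =
     exceeding_sets (primes_below x) (\<lambda>p. 1 / real p) (2 powr (1 - eta * real j / sqrt a))
       (exp (a + (kappa * real j - 19)))
   \<union> exceeding_sets (primes_below x) (\<lambda>p. 1 / real p) (2 powr (1 + eta * real j / sqrt a))
       (exp (a + (kappa * real j - 19)))
   \<union> exceeding_sets (primes_below x) (\<lambda>p. 1 / real p) (2 powr (1/2)) (exp (a + (real j / 25 - 6)))"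

lemma finite_tilt_family: "finite (tilt_family x a j)"
  unfolding tilt_family_def exceeding_sets_def by simp

lemma sum_prod_tilt_family_le:
  "(\<Sum>S\<in>tilt_family x a j. \<Prod>p\<in>S. 1 / real p)
    \<le> (\<Prod>p\<in>primes_below x. 1 + 1 / real p) / exp a
        * (2 * exp (- (kappa * real j - 19)) + exp (- (real j / 25 - 6)))"
proof -
  let ?E = "\<lambda>t g. exceeding_sets (primes_below x) (\<lambda>p. 1 / real p) t (exp (a + g))"
  let ?w = "\<lambda>B. \<Sum>S\<in>B. \<Prod>p\<in>S. 1 / real p"
  let ?W = "(\<Prod>p\<in>primes_below x. 1 + 1 / real p) / exp a"
  have fin: "finite (?E t g)" for t g unfolding exceeding_sets_def by simp
  have "?w (A \<union> B) \<le> ?w A + ?w B" if "finite A" "finite B" for A B :: "nat set set"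
    using that by (intro sum_Un_le) (auto intro!: prod_nonneg)
  then have "?w (tilt_family x a j)
      \<le> ?w (?E (2 powr (1 - eta * real j / sqrt a)) (kappa * real j - 19))
        + ?w (?E (2 powr (1 + eta * real j / sqrt a)) (kappa * real j - 19))
        + ?w (?E (2 powr (1/2)) (real j / 25 - 6))"
    unfolding tilt_family_def using fin by (meson add_right_mono finite_UnI order.trans)
  also have "\<dots> \<le> ?W * exp (- (kappa * real j - 19)) + ?W * exp (- (kappa * real j - 19))
      + ?W * exp (- (real j / 25 - 6))"
    by (intro add_mono sum_prod_exceeding_primes_le) auto
  finally show ?thesis by (simp add: algebra_simps)
qed

lemma bad_subset_tilt_families:
  assumes a: "a \<ge> 1"
  shows "{S\<in>Pow (primes_below x). \<Prod>S \<notin> SA_lt delta0 (exp a) x}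
    \<subseteq> (\<Union>j<nat \<lceil>ln (Logm x) + a / c0\<rceil> + 1. tilt_family x a j)"
proof
  fix S assume "S \<in> {S\<in>Pow (primes_below x). \<Prod>S \<notin> SA_lt delta0 (exp a) x}"
  then have SP: "S \<subseteq> primes_below x" and bad: "\<Prod>S \<notin> SA_lt delta0 (exp a) x" by auto
  have fS: "finite S" and pS: "\<forall>p\<in>S. prime p"
    using SP finite_subset[OF SP finite_primes_below] unfolding primes_below_def by auto
  have "\<Prod>S \<in> S_lt x" using bij_betw_imp_surj_on[OF bij_betw_prod_S_lt[of x]] SP by auto
  then obtain y where y: "1 \<le> y" "y \<le> x"
    and ny: "\<not> real (tau (part_lt (\<Prod>S) y)) \<le> exp a * exp (- fA delta0 (exp a) y) * Logm y"
    using bad unfolding SA_lt_def by auto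
  have "tau (part_lt (\<Prod>S) y) = 2 ^ card {p\<in>S. real p < y}"
    unfolding part_lt_prod_primes[OF fS pS] using fS pS by (intro tau_prod_primes) auto
  with ny have gt: "2 ^ card {p\<in>S. real p < y} > exp a * exp (- fA delta0 (exp a) y) * Logm y"
    by simp
  define l where "l = ln (Logm y)"
  have l0: "l \<ge> 0" unfolding l_def Logm_def by simp
  have lx: "l \<le> ln (Logm x)"
    unfolding l_def Logm_def using y by (simp add: max.coboundedI2)
  have f: "fA delta0 (exp a) y = delta0 * min ((max 1 l - a / c0)^2 / a) (a + max 1 l)"
    unfolding fA_def Log2_def Logm_def[of "exp a"] l_def Logm_def[of "Logm y"] c0_def
    using a by (simp add: max_def)
  have f0: "fA delta0 (exp a) y \<ge> 0" unfolding f using delta0_pos a by simp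
  obtain j :: nat where j: "real j \<le> l + a / c0" and cases:
    "(eta * real j / sqrt a \<le> 1 \<and> tilt_clears a l (fA delta0 (exp a) y) 6 (1 - eta * real j / sqrt a) (kappa * real j - (1 + 3 * 6)))
     \<or> tilt_clears a l (fA delta0 (exp a) y) 6 (1 + eta * real j / sqrt a) (kappa * real j - (1 + 3 * 6))
     \<or> tilt_clears a l (fA delta0 (exp a) y) 6 (1/2) (real j / 25 - 6)"
    using tilt_clears_exists[OF a l0 _ f0, of 6] f by auto
  have "j < nat \<lceil>ln (Logm x) + a / c0\<rceil> + 1" using j lx by linarith
  moreover have "eta * real j / sqrt a \<ge> 0" unfolding eta_def using a by simp
  then have "S \<in> tilt_family x a j"
    using cases in_exceeding_sets_if_tilt_clears[OF SP y(2) _ _ gt]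
    unfolding tilt_family_def l_def by auto
  ultimately show "S \<in> (\<Union>j<nat \<lceil>ln (Logm x) + a / c0\<rceil> + 1. tilt_family x a j)" by blast
qed

definition tail_const :: real where
  "tail_const = 2 * exp 19 / (1 - exp (- kappa)) + exp 6 / (1 - exp (- 1/25))"

lemma tail_const_nonneg: "tail_const \<ge> 0"
  unfolding tail_const_def using kappa_pos by (intro add_nonneg_nonneg divide_nonneg_pos) auto

lemma sum_geometric_le:
  fixes r :: real
  assumes "0 \<le> r" "r < 1"
  shows "(\<Sum>i<n. r^i) \<le> 1 / (1 - r)"
  using assms sum_gp_strict[of r n] by (simp add: divide_right_mono)

lemma sum_tilt_levels_le:
  "(\<Sum>j<N. 2 * exp (- (kappa * real j - 19)) + exp (- (real j / 25 - 6))) \<le> tail_const"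
proof -
  have "exp (- (kappa * real j - 19)) = exp 19 * exp (- kappa) ^ j"
    and "exp (- (real j / 25 - 6)) = exp 6 * exp (- 1/25) ^ j" for j
    by (simp_all flip: exp_of_nat_mult exp_add add: algebra_simps)
  then have "(\<Sum>j<N. 2 * exp (- (kappa * real j - 19)) + exp (- (real j / 25 - 6)))
      = 2 * exp 19 * (\<Sum>j<N. exp (- kappa) ^ j) + exp 6 * (\<Sum>j<N. exp (- 1/25) ^ j)"
    by (simp add: sum.distrib sum_distrib_left mult.assoc)
  also have "\<dots> \<le> 2 * exp 19 * (1 / (1 - exp (- kappa))) + exp 6 * (1 / (1 - exp (- 1/25)))"
    using kappa_pos by (intro add_mono mult_left_mono sum_geometric_le) auto
  finally show ?thesis unfolding tail_const_def by simp
qed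

lemma sum_prod_bad_le:
  assumes "a \<ge> 1"
  shows "(\<Sum>S\<in>{S\<in>Pow (primes_below x). \<Prod>S \<notin> SA_lt delta0 (exp a) x}. \<Prod>p\<in>S. 1 / real p)
    \<le> (\<Prod>p\<in>primes_below x. 1 + 1 / real p) / exp a * tail_const"
proof -
  define N where "N = nat \<lceil>ln (Logm x) + a / c0\<rceil> + 1"
  define W where "W = (\<Prod>p\<in>primes_below x. 1 + 1 / real p)"
  have W0: "W \<ge> 0" unfolding W_def by (intro prod_nonneg) (simp add: add_nonneg_nonneg)
  have "(\<Sum>S\<in>{S\<in>Pow (primes_below x). \<Prod>S \<notin> SA_lt delta0 (exp a) x}. \<Prod>p\<in>S. 1 / real p)
      \<le> (\<Sum>S\<in>(\<Union>j<N. tilt_family x a j). \<Prod>p\<in>S. 1 / real p)"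
    using bad_subset_tilt_families[OF assms, of x] finite_tilt_family unfolding N_def
    by (intro sum_mono2) (auto intro!: prod_nonneg)
  also have "\<dots> \<le> (\<Sum>j<N. \<Sum>S\<in>tilt_family x a j. \<Prod>p\<in>S. 1 / real p)"
    using finite_tilt_family by (intro sum_UN_le) (auto intro!: prod_nonneg)
  also have "\<dots> \<le> (\<Sum>j<N. W / exp a * (2 * exp (- (kappa * real j - 19)) + exp (- (real j / 25 - 6))))"
    unfolding W_def by (intro sum_mono sum_prod_tilt_family_le)
  also have "\<dots> = W / exp a * (\<Sum>j<N. 2 * exp (- (kappa * real j - 19)) + exp (- (real j / 25 - 6)))"
    by (simp only: sum_distrib_left)
  also have "\<dots> \<le> W / exp a * tail_const"
    using sum_tilt_levels_le W0 by (intro mult_left_mono) auto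
  finally show ?thesis unfolding W_def .
qed

lemma sum_recip_not_SA_le:
  assumes "A \<ge> 1"
  shows "(\<Sum>n\<in>S_lt x - SA_lt delta0 A x. 1 / real n) \<le> exp 6 * (exp 1 + tail_const) * Logm x / A"
proof -
  define W where "W = (\<Prod>p\<in>primes_below x. 1 + 1 / real p)"
  have W: "W \<le> exp 6 * Logm x" unfolding W_def by (rule prod_one_plus_recip_primes_below_le)
  have W0: "W \<ge> 0" unfolding W_def by (intro prod_nonneg) (simp add: add_nonneg_nonneg)
  have "(\<Sum>n\<in>S_lt x - SA_lt delta0 A x. 1 / real n)
      = (\<Sum>S\<in>{S\<in>Pow (primes_below x). \<Prod>S \<notin> SA_lt delta0 A x}. \<Prod>p\<in>S. 1 / real p)"
    by (rule sum_recip_S_lt_diff)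
  also have "\<dots> \<le> W * max (exp 1) tail_const / A"
  proof (cases "A < exp 1")
    case True
    have "(\<Sum>S\<in>{S\<in>Pow (primes_below x). \<Prod>S \<notin> SA_lt delta0 A x}. \<Prod>p\<in>S. 1 / real p) \<le> W"
      unfolding W_def by (intro sum_prod_le_prod_one_plus) auto
    also have "\<dots> \<le> W * max (exp 1) tail_const / A"
      using True assms W0 by (simp add: le_divide_eq mult_left_mono)
    finally show ?thesis .
  next
    case False
    then have "ln A \<ge> 1" using assms by (simp add: ln_ge_iff)
    then have "(\<Sum>S\<in>{S\<in>Pow (primes_below x). \<Prod>S \<notin> SA_lt delta0 A x}. \<Prod>p\<in>S. 1 / real p)
        \<le> W / A * tail_const"
      using sum_prod_bad_le[of "ln A" x] assms unfolding W_def by simp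
    also have "\<dots> \<le> W * max (exp 1) tail_const / A"
      using W0 assms by (simp add: divide_right_mono mult_left_mono)
    finally show ?thesis .
  qed
  also have "\<dots> \<le> exp 6 * Logm x * (exp 1 + tail_const) / A"
    using W W0 tail_const_nonneg assms by (intro divide_right_mono mult_mono) auto
  also have "\<dots> = exp 6 * (exp 1 + tail_const) * Logm x / A" by (simp add: ac_simps)
  finally show ?thesis .
qed

theorem proposition5p1:
  shows "\<exists>\<delta>::real. \<delta> > 0 \<and> (\<exists>C::real. \<forall>A x. A \<ge> 1 \<longrightarrow> x > 1 \<longrightarrow>
     (\<Sum>n\<in>S_lt x - SA_lt \<delta> A x. 1 / real n) \<le> C * Logm x / A)"
  using delta0_pos sum_recip_not_SA_le by blast

end
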